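(* Let $k>0$ be sufficiently large, let $f_k:\mathbb T^2\to\mathbb T^2$ be the standard map, and for $z\in\mathbb T^2$ let $e^{(1)}(z)$ (resp. $e^{(-1)}(z)$) be the most contracted direction of $Df_k(z)$ (resp. of $D(f_k^{-1})(z)$). Then the set $$\mathcal C^{(1)}=\{z\in\mathbb T^2:\ e^{(1)}(z)\text{ and } e^{(-1)}(z)\text{ span the same line}\}$$ of tangencies between the foliations $\mathcal E^{(1)}$ and $\mathcal E^{(-1)}$ consists of two smooth curves, contained in $$\hat\Delta_T=\{(x,y): y\in[\hat\delta^-_T,\hat\delta^+_T]\cup[1-\hat\delta^+_T,1-\hat\delta^-_T]\},$$ and, in the coordinates $(\tilde y,y)$ with $\tilde y=y-x \bmod 1$, $\mathcal C^{(1)}$ is the graph $\{(\tilde y,y): y\in\Gamma(\tilde y)\}$ of the multivalued function $\Gamma$ defined below.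
   Context: The standard map with parameter $k>0$ is $f_k(x,y)=(x+k\sin(2\pi y),\,x+y+k\sin(2\pi y)) \bmod 1$ on $\mathbb T^2=\mathbb R^2/\mathbb Z^2$; its inverse is $f_k^{-1}(x,y)=(x-k\sin 2\pi(y-x),\,y-x)\bmod 1$. For an invertible linear map $A$ of $\mathbb R^2$ with $\min_{\|v\|=1}\|Av\|<\max_{\|v\|=1}\|Av\|$, the most contracted direction is the line spanned by a unit vector $v$ minimizing $\|Av\|$ (the most expanded direction is the one maximizing it). The foliations $\mathcal E^{(1)}$, $\mathcal E^{(-1)}$ are the integral curves of the direction fields $e^{(1)}$, $e^{(-1)}$. Inverse trigonometric functions take values $\cos^{-1}:[-1,1]\to[0,\pi]$, $\tan^{-1}:\mathbb R\to[-\pi/2,\pi/2]$. Constants: $\delta^*=\frac1{2\pi}\cos^{-1}\!\left(-\frac{1}{4\pi k}\right)$, $\delta^{\pm}=\frac1{2\pi}\cos^{-1}\!\left(-\frac{1\pm\sqrt3}{4\pi k}\right)$, $\hat\delta^-_T=\frac1{2\pi}\cos^{-1}\!\left(-\frac{1+\sqrt3/3}{4\pi k}\right)$, $\hat\delta^+_T=\frac1{2\pi}\cos^{-1}\!\left(-\frac{1+3\sqrt3}{4\pi k}\right)$ (for large $k$ these satisfy $\delta^-<1/4<\delta^*<\hat\delta^-_T<\delta^+<\hat\delta^+_T$). For $\tilde y\in[0,1)$ let $\tilde\psi_c(\tilde y)=2\pi k\cos(2\pi\tilde y)$ and $\tilde\varphi(\tilde y)=-\frac{2(\tilde\psi_c^2+\tilde\psi_c+1)}{1+2\tilde\psi_c}$.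 Let $\Phi(\tilde y)$ be the set of $y\in[0,1)$ with $2\pi k\cos(2\pi y)=\frac{-(\tilde\varphi+2)\pm\sqrt{3\tilde\varphi^2+4}}{2\tilde\varphi}$, $\tilde\varphi=\tilde\varphi(\tilde y)$ (either sign), i.e. $y=\frac1{2\pi}\cos^{-1}\frac{-(\tilde\varphi+2)\pm\sqrt{3\tilde\varphi^2+4}}{4\pi k\tilde\varphi}$ or $1$ minus such a value. Define $\Gamma(\tilde y)=\Phi(\tilde y)\cap\big([\delta^-,\delta^+]\cup[1-\delta^+,1-\delta^-]\big)$ if $\tilde y\in[0,\delta^*]\cup[1-\delta^*,1]$, and $\Gamma(\tilde y)=\Phi(\tilde y)\cap[\delta^+,1-\delta^+]$ if $\tilde y\in[\delta^*,1-\delta^*]$. *)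

theory Defs
  imports "HOL-Analysis.Analysis"
begin

(* Points of the torus T^2 = R^2/Z^2 are represented by their unique representative
   in [0,1) x [0,1); tangent vectors are elements of real x real (Euclidean norm). *)

definition torus_rep :: "(real \<times> real) set" where
  "torus_rep = {0..<1} \<times> {0..<1}"

definition torus_proj :: "real \<times> real \<Rightarrow> real \<times> real" where
  "torus_proj z = (frac (fst z), frac (snd z))"

(* Lifts to R^2 of the standard map f_k and of its inverse (their derivatives are Df_k, D(f_k^-1)). *)
definition std_map_lift :: "real \<Rightarrow> real \<times> real \<Rightarrow> real \<times> real" where
  "std_map_lift k z = (let x = fst z; y = snd z in
      (x + k * sin (2 * pi * y), x + y + k * sin (2 * pi * y)))"

definition std_map_inv_lift :: "real \<Rightarrow> real \<times> real \<Rightarrow> real \<times> real" where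
  "std_map_inv_lift k z = (let x = fst z; y = snd z in
      (x - k * sin (2 * pi * (y - x)), y - x))"

definition most_contracted_line :: "(real \<times> real \<Rightarrow> real \<times> real) \<Rightarrow> (real \<times> real) set \<Rightarrow> bool" where
  "most_contracted_line A L \<longleftrightarrow>
     (\<exists>v. norm v = 1 \<and> (\<forall>w. norm w = 1 \<longrightarrow> norm (A v) \<le> norm (A w)) \<and> L = span {v})"

definition e_plus :: "real \<Rightarrow> real \<times> real \<Rightarrow> (real \<times> real) set \<Rightarrow> bool" where
  "e_plus k z L \<longleftrightarrow> (\<exists>A. (std_map_lift k has_derivative A) (at z) \<and> most_contracted_line A L)"

definition e_minus :: "real \<Rightarrow> real \<times> real \<Rightarrow> (real \<times> real) set \<Rightarrow> bool" where
  "e_minus k z L \<longleftrightarrow> (\<exists>A. (std_map_inv_lift k has_derivative A) (at z) \<and> most_contracted_line A L)"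

definition tangency_set :: "real \<Rightarrow> (real \<times> real) set" where
  "tangency_set k = {z \<in> torus_rep. \<exists>L. e_plus k z L \<and> e_minus k z L}"

definition delta_star :: "real \<Rightarrow> real" where
  "delta_star k = arccos (- 1 / (4 * pi * k)) / (2 * pi)"
definition delta_plus :: "real \<Rightarrow> real" where
  "delta_plus k = arccos (- (1 + sqrt 3) / (4 * pi * k)) / (2 * pi)"
definition delta_minus :: "real \<Rightarrow> real" where
  "delta_minus k = arccos (- (1 - sqrt 3) / (4 * pi * k)) / (2 * pi)"
definition delta_hat_T_minus :: "real \<Rightarrow> real" where
  "delta_hat_T_minus k = arccos (- (1 + sqrt 3 / 3) / (4 * pi * k)) / (2 * pi)"
definition delta_hat_T_plus :: "real \<Rightarrow> real" where
  "delta_hat_T_plus k = arccos (- (1 + 3 * sqrt 3) / (4 * pi * k)) / (2 * pi)"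

definition Delta_hat_T :: "real \<Rightarrow> (real \<times> real) set" where
  "Delta_hat_T k = {z. snd z \<in> {delta_hat_T_minus k .. delta_hat_T_plus k}
                        \<union> {1 - delta_hat_T_plus k .. 1 - delta_hat_T_minus k}}"

definition psi_c :: "real \<Rightarrow> real \<Rightarrow> real" where
  "psi_c k yt = 2 * pi * k * cos (2 * pi * yt)"

definition phi_t :: "real \<Rightarrow> real \<Rightarrow> real" where
  "phi_t k yt = - 2 * ((psi_c k yt)\<^sup>2 + psi_c k yt + 1) / (1 + 2 * psi_c k yt)"

definition Phi_set :: "real \<Rightarrow> real \<Rightarrow> real set" where
  "Phi_set k yt = {y \<in> {0..<1}. let \<phi> = phi_t k yt in
      2 * pi * k * cos (2 * pi * y) = (- (\<phi> + 2) + sqrt (3 * \<phi>\<^sup>2 + 4)) / (2 * \<phi>) \<or>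
      2 * pi * k * cos (2 * pi * y) = (- (\<phi> + 2) - sqrt (3 * \<phi>\<^sup>2 + 4)) / (2 * \<phi>)}"

definition Gamma_set :: "real \<Rightarrow> real \<Rightarrow> real set" where
  "Gamma_set k yt =
     (if yt \<in> {0..delta_star k} \<union> {1 - delta_star k..1}
      then Phi_set k yt \<inter> ({delta_minus k..delta_plus k} \<union> {1 - delta_plus k..1 - delta_minus k})
      else Phi_set k yt \<inter> {delta_plus k..1 - delta_plus k})"

fun nth_vderiv :: "nat \<Rightarrow> (real \<Rightarrow> 'a::real_normed_vector) \<Rightarrow> real \<Rightarrow> 'a" where
  "nth_vderiv 0 g = g"
| "nth_vderiv (Suc n) g = (\<lambda>t. vector_derivative (nth_vderiv n g) (at t))"

definition smooth_regular_curve :: "(real \<Rightarrow> real \<times> real) \<Rightarrow> bool" where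
  "smooth_regular_curve g \<longleftrightarrow>
     (\<forall>n t. nth_vderiv n g differentiable (at t)) \<and> (\<forall>t. vector_derivative g (at t) \<noteq> 0)"

definition two_smooth_curves :: "(real \<times> real) set \<Rightarrow> bool" where
  "two_smooth_curves S \<longleftrightarrow>
     (\<exists>g1 g2. smooth_regular_curve g1 \<and> smooth_regular_curve g2 \<and>
        torus_proj ` range g1 \<inter> torus_proj ` range g2 = {} \<and>
        S = torus_proj ` range g1 \<union> torus_proj ` range g2)"

end

theory Submission
  imports Defs "HOL-Complex_Analysis.Cauchy_Integral_Formula"
begin

text \<open>
  For a linear map \<open>A\<close> of the plane, \<open>|A (cos \<theta>, sin \<theta>)|\<^sup>2 = m + \<alpha> cos 2\<theta> + \<beta> sin 2\<theta>\<close>,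
  so a most contracted direction is one whose doubled angle points opposite to \<open>(\<alpha>, \<beta>)\<close>.
  Hence \<open>Df\<^sub>k\<close> and \<open>D(f\<^sub>k\<^sup>-\<^sup>1)\<close> share it exactly when their coefficient vectors \<open>(\<alpha>, \<beta>)\<close>
  are positively parallel. With \<open>\<psi> = \<psi>\<^sub>c(y)\<close> and \<open>t = \<psi>\<^sub>c(y - x)\<close> this is a quadratic equation
  in \<open>\<psi>\<close>, and the sign condition selects its root \<open>\<psi> = \<psi>\<^sub>-(t)\<close>.
  Since \<open>\<psi>\<^sub>-\<close> takes values in \<open>[-(1 + 3\<surd>3)/2, -(1 + \<surd>3/3)/2]\<close>, for \<open>k \<ge> 1\<close> the equation
  \<open>\<psi>\<^sub>c(y) = \<psi>\<^sub>-(\<psi>\<^sub>c(s))\<close> has exactly two solutions \<open>y = h(s)\<close> and \<open>y = 1 - h(s)\<close>, with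
  \<open>0 < h < 1/2\<close>, so the tangency set is the union of two graphs over \<open>s = y - x\<close>. They are
  smooth because \<open>h\<close> extends holomorphically to a neighbourhood of the real line, and the
  localisation in \<open>\<Delta>\<^sub>T\<close> and the description by \<open>\<Gamma>\<close> come from comparing the two roots
  \<open>\<psi>\<^sub>\<plusminus>(t)\<close> with the levels defining the constants \<open>\<delta>\<close>.
\<close>

section \<open>Most contracted directions in the plane\<close>

definition antiparallel :: "real \<Rightarrow> real \<Rightarrow> real \<Rightarrow> real \<Rightarrow> bool" where
  "antiparallel al be u1 u2 \<longleftrightarrow> al * u2 = be * u1 \<and> al * u1 + be * u2 < 0"

definition minimizes_norm :: "('a::real_normed_vector \<Rightarrow> 'b::real_normed_vector) \<Rightarrow> 'a \<Rightarrow> bool" where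
  "minimizes_norm A v \<longleftrightarrow> (\<forall>w. norm w = 1 \<longrightarrow> norm (A v) \<le> norm (A w))"

lemma exists_half_angle:
  fixes u1 u2 :: real
  assumes "u1\<^sup>2 + u2\<^sup>2 = 1"
  obtains a b where "a\<^sup>2 + b\<^sup>2 = 1" "a\<^sup>2 - b\<^sup>2 = u1" "2 * a * b = u2"
proof -
  obtain t where "u1 = cos t" "u2 = sin t"
    using sincos_total_2pi[OF assms] by metis
  then show ?thesis
    using that[of "cos (t/2)" "sin (t/2)"] cos_double[of "t/2"] sin_double[of "t/2"] by simp
qed

lemma double_angle_unit:
  fixes a b :: real
  assumes "a\<^sup>2 + b\<^sup>2 = 1"
  shows "(a\<^sup>2 - b\<^sup>2)\<^sup>2 + (2 * a * b)\<^sup>2 = 1"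
proof -
  have "(a\<^sup>2 - b\<^sup>2)\<^sup>2 + (2 * a * b)\<^sup>2 = (a\<^sup>2 + b\<^sup>2)\<^sup>2"
    by (simp add: power2_eq_square algebra_simps)
  then show ?thesis using assms by simp
qed

lemma inner_unit_ge_neg_norm:
  fixes al be u1 u2 :: real
  assumes "u1\<^sup>2 + u2\<^sup>2 = 1"
  shows "- sqrt (al\<^sup>2 + be\<^sup>2) \<le> al * u1 + be * u2"
    and "(al, be) \<noteq> 0 \<Longrightarrow> al * u1 + be * u2 = - sqrt (al\<^sup>2 + be\<^sup>2) \<longleftrightarrow> antiparallel al be u1 u2"
proof -
  have "(al * u1 + be * u2)\<^sup>2 + (al * u2 - be * u1)\<^sup>2 = (al\<^sup>2 + be\<^sup>2) * (u1\<^sup>2 + u2\<^sup>2)"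
    by (simp add: power2_eq_square algebra_simps)
  then have lagrange: "(al * u1 + be * u2)\<^sup>2 + (al * u2 - be * u1)\<^sup>2 = al\<^sup>2 + be\<^sup>2"
    using assms by simp
  then have "\<bar>al * u1 + be * u2\<bar>\<^sup>2 \<le> al\<^sup>2 + be\<^sup>2"
    using zero_le_power2[of "al * u2 - be * u1"] power2_abs[of "al * u1 + be * u2"] by linarith
  then have "\<bar>al * u1 + be * u2\<bar> \<le> sqrt (al\<^sup>2 + be\<^sup>2)"
    by (rule real_le_rsqrt)
  then show "- sqrt (al\<^sup>2 + be\<^sup>2) \<le> al * u1 + be * u2"
    by linarith
  assume "(al, be) \<noteq> 0"
  then have pos: "0 < sqrt (al\<^sup>2 + be\<^sup>2)"
    by (simp add: zero_prod_def sum_power2_gt_zero_iff)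
  show "al * u1 + be * u2 = - sqrt (al\<^sup>2 + be\<^sup>2) \<longleftrightarrow> antiparallel al be u1 u2"
  proof
    assume eq: "al * u1 + be * u2 = - sqrt (al\<^sup>2 + be\<^sup>2)"
    then have "(al * u2 - be * u1)\<^sup>2 = 0" using lagrange by simp
    then show "antiparallel al be u1 u2" using eq pos by (simp add: antiparallel_def)
  next
    assume "antiparallel al be u1 u2"
    then have "sqrt (al\<^sup>2 + be\<^sup>2) = sqrt ((al * u1 + be * u2)\<^sup>2)" and "al * u1 + be * u2 < 0"
      using lagrange by (simp_all add: antiparallel_def)
    then show "al * u1 + be * u2 = - sqrt (al\<^sup>2 + be\<^sup>2)"
      by simp
  qed
qed

lemma unit_vector_attaining_neg_norm:
  fixes al be :: real
  assumes "(al, be) \<noteq> 0"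
  defines "R \<equiv> sqrt (al\<^sup>2 + be\<^sup>2)"
  shows "(- al / R)\<^sup>2 + (- be / R)\<^sup>2 = 1" and "al * (- al / R) + be * (- be / R) = - R"
proof -
  have "0 < al\<^sup>2 + be\<^sup>2"
    using assms sum_power2_gt_zero_iff[of al be] by (auto simp: zero_prod_def)
  then have R2: "R\<^sup>2 = al\<^sup>2 + be\<^sup>2" and "R \<noteq> 0" by (simp_all add: R_def sum_power2_gt_zero_iff)
  have "(- al / R)\<^sup>2 + (- be / R)\<^sup>2 = (al\<^sup>2 + be\<^sup>2) / R\<^sup>2"
    by (simp add: power_divide add_divide_distrib)
  also have "\<dots> = 1"
    using \<open>R \<noteq> 0\<close> by (simp only: R2[symmetric]) simp
  finally show "(- al / R)\<^sup>2 + (- be / R)\<^sup>2 = 1" .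
  have "al * (- al / R) + be * (- be / R) = - R\<^sup>2 / R"
    unfolding R2 by (simp add: power2_eq_square diff_divide_distrib add_divide_distrib)
  then show "al * (- al / R) + be * (- be / R) = - R"
    using \<open>R \<noteq> 0\<close> by (simp add: power2_eq_square)
qed

lemma minimizes_norm_iff_antiparallel:
  fixes f :: "real \<times> real \<Rightarrow> 'b::real_normed_vector"
  assumes Q: "\<And>a b. (norm (f (a, b)))\<^sup>2 = m * (a\<^sup>2 + b\<^sup>2) + al * (a\<^sup>2 - b\<^sup>2) + be * (2 * a * b)"
    and nz: "(al, be) \<noteq> 0" and v: "a\<^sup>2 + b\<^sup>2 = 1"
  shows "minimizes_norm f (a, b) \<longleftrightarrow> antiparallel al be (a\<^sup>2 - b\<^sup>2) (2 * a * b)"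
proof -
  define val where "val = al * (a\<^sup>2 - b\<^sup>2) + be * (2 * a * b)"
  have "norm (f (a, b)) \<le> norm (f (c, d)) \<longleftrightarrow> val \<le> al * (c\<^sup>2 - d\<^sup>2) + be * (2 * c * d)"
    if "c\<^sup>2 + d\<^sup>2 = 1" for c d
  proof -
    have "norm (f (a, b)) \<le> norm (f (c, d)) \<longleftrightarrow> (norm (f (a, b)))\<^sup>2 \<le> (norm (f (c, d)))\<^sup>2"
      by (simp add: power_mono_iff)
    then show ?thesis unfolding Q v that val_def by simp
  qed
  then have "minimizes_norm f (a, b) \<longleftrightarrow>
      (\<forall>c d. c\<^sup>2 + d\<^sup>2 = 1 \<longrightarrow> val \<le> al * (c\<^sup>2 - d\<^sup>2) + be * (2 * c * d))"
    unfolding minimizes_norm_def by (simp add: norm_Pair)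
  also have "\<dots> \<longleftrightarrow> (\<forall>u1 u2. u1\<^sup>2 + u2\<^sup>2 = 1 \<longrightarrow> val \<le> al * u1 + be * u2)"
    by (metis exists_half_angle double_angle_unit)
  also have "\<dots> \<longleftrightarrow> val = - sqrt (al\<^sup>2 + be\<^sup>2)"
  proof
    assume "\<forall>u1 u2. u1\<^sup>2 + u2\<^sup>2 = 1 \<longrightarrow> val \<le> al * u1 + be * u2"
    then have "val \<le> - sqrt (al\<^sup>2 + be\<^sup>2)" using unit_vector_attaining_neg_norm[OF nz] by metis
    moreover have "- sqrt (al\<^sup>2 + be\<^sup>2) \<le> val"
      unfolding val_def by (rule inner_unit_ge_neg_norm(1)[OF double_angle_unit[OF v]])
    ultimately show "val = - sqrt (al\<^sup>2 + be\<^sup>2)" by simp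
  qed (simp add: inner_unit_ge_neg_norm(1))
  also have "\<dots> \<longleftrightarrow> antiparallel al be (a\<^sup>2 - b\<^sup>2) (2 * a * b)"
    unfolding val_def by (rule inner_unit_ge_neg_norm(2)[OF double_angle_unit[OF v] nz])
  finally show ?thesis .
qed

lemma antiparallel_unit_imp_scaled:
  assumes "u1\<^sup>2 + u2\<^sup>2 = 1" and "antiparallel al be u1 u2"
  shows "al = (al * u1 + be * u2) * u1" and "be = (al * u1 + be * u2) * u2"
proof -
  have eq: "al * u2 = be * u1" using assms(2) by (simp add: antiparallel_def)
  have "al = al * u1 * u1 + (al * u2) * u2"
    using assms(1) by (simp add: power2_eq_square algebra_simps flip: distrib_left)
  also have "\<dots> = (al * u1 + be * u2) * u1" unfolding eq by (simp add: algebra_simps)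
  finally show "al = (al * u1 + be * u2) * u1" .
  have "be = (be * u1) * u1 + be * u2 * u2"
    using assms(1) by (simp add: power2_eq_square algebra_simps flip: distrib_left)
  also have "\<dots> = (al * u1 + be * u2) * u2" unfolding eq[symmetric] by (simp add: algebra_simps)
  finally show "be = (al * u1 + be * u2) * u2" .
qed

lemma common_antiparallel_iff:
  assumes "(alA, beA) \<noteq> 0"
  shows "(\<exists>u1 u2. u1\<^sup>2 + u2\<^sup>2 = 1 \<and> antiparallel alA beA u1 u2 \<and> antiparallel alB beB u1 u2)
     \<longleftrightarrow> alA * beB = beA * alB \<and> 0 < alA * alB + beA * beB"
proof
  assume "\<exists>u1 u2. u1\<^sup>2 + u2\<^sup>2 = 1 \<and> antiparallel alA beA u1 u2 \<and> antiparallel alB beB u1 u2"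
  then obtain u1 u2 where u: "u1\<^sup>2 + u2\<^sup>2 = 1"
    and A: "antiparallel alA beA u1 u2" and B: "antiparallel alB beB u1 u2" by blast
  define mA where "mA = alA * u1 + beA * u2"
  define mB where "mB = alB * u1 + beB * u2"
  have "alA = mA * u1" "beA = mA * u2" "alB = mB * u1" "beB = mB * u2"
    using antiparallel_unit_imp_scaled[OF u A] antiparallel_unit_imp_scaled[OF u B]
    by (simp_all add: mA_def mB_def)
  moreover have "0 < mA * mB"
    using A B by (simp add: antiparallel_def mA_def mB_def mult_neg_neg)
  moreover have "alA * alB + beA * beB = mA * mB * (u1\<^sup>2 + u2\<^sup>2)" if "alA = mA * u1" "beA = mA * u2" "alB = mB * u1" "beB = mB * u2"
    unfolding that by (simp add: power2_eq_square algebra_simps)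
  ultimately show "alA * beB = beA * alB \<and> 0 < alA * alB + beA * beB"
    using u by simp
next
  assume H: "alA * beB = beA * alB \<and> 0 < alA * alB + beA * beB"
  define R where "R = sqrt (alA\<^sup>2 + beA\<^sup>2)"
  have "0 < R" using assms sum_power2_gt_zero_iff[of alA beA] by (auto simp: R_def zero_prod_def)
  note u = unit_vector_attaining_neg_norm[OF assms, folded R_def]
  have "antiparallel alA beA (- alA / R) (- beA / R)"
    using u(2) \<open>0 < R\<close> by (simp add: antiparallel_def)
  moreover have "antiparallel alB beB (- alA / R) (- beA / R)"
    using H \<open>0 < R\<close> by (simp add: antiparallel_def field_simps)
  ultimately show "\<exists>u1 u2. u1\<^sup>2 + u2\<^sup>2 = 1 \<and> antiparallel alA beA u1 u2 \<and> antiparallel alB beB u1 u2"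
    using u(1) by blast
qed

lemma exists_common_minimizer_iff:
  fixes f g :: "real \<times> real \<Rightarrow> 'b::real_normed_vector"
  assumes "\<And>a b. (norm (f (a, b)))\<^sup>2 = mA * (a\<^sup>2 + b\<^sup>2) + alA * (a\<^sup>2 - b\<^sup>2) + beA * (2 * a * b)"
    and "\<And>a b. (norm (g (a, b)))\<^sup>2 = mB * (a\<^sup>2 + b\<^sup>2) + alB * (a\<^sup>2 - b\<^sup>2) + beB * (2 * a * b)"
    and "(alA, beA) \<noteq> 0" and "(alB, beB) \<noteq> 0"
  shows "(\<exists>v. norm v = 1 \<and> minimizes_norm f v \<and> minimizes_norm g v)
     \<longleftrightarrow> alA * beB = beA * alB \<and> 0 < alA * alB + beA * beB"
proof -
  have "(\<exists>v. norm v = 1 \<and> minimizes_norm f v \<and> minimizes_norm g v) \<longleftrightarrow>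
      (\<exists>a b. a\<^sup>2 + b\<^sup>2 = 1 \<and> antiparallel alA beA (a\<^sup>2 - b\<^sup>2) (2 * a * b)
                             \<and> antiparallel alB beB (a\<^sup>2 - b\<^sup>2) (2 * a * b))"
    using minimizes_norm_iff_antiparallel[OF assms(1,3)] minimizes_norm_iff_antiparallel[OF assms(2,4)]
    by (simp add: split_paired_Ex norm_Pair cong: conj_cong)
  also have "\<dots> \<longleftrightarrow>
      (\<exists>u1 u2. u1\<^sup>2 + u2\<^sup>2 = 1 \<and> antiparallel alA beA u1 u2 \<and> antiparallel alB beB u1 u2)"
    by (metis exists_half_angle double_angle_unit)
  finally show ?thesis using common_antiparallel_iff[OF assms(3)] by simp
qed

lemma common_most_contracted_line_iff:
  fixes A B :: "real \<times> real \<Rightarrow> real \<times> real"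
  assumes "linear B"
  shows "(\<exists>L. most_contracted_line A L \<and> most_contracted_line B L) \<longleftrightarrow>
         (\<exists>v. norm v = 1 \<and> minimizes_norm A v \<and> minimizes_norm B v)"
proof
  assume "\<exists>L. most_contracted_line A L \<and> most_contracted_line B L"
  then obtain v w where v: "norm v = 1" "minimizes_norm A v" and w: "norm w = 1" "minimizes_norm B w"
    and span: "span {v} = span {w}"
    unfolding most_contracted_line_def minimizes_norm_def by metis
  have "v \<in> span {w}" using span span_base[of v "{v}"] by simp
  then obtain c where c: "v = c *\<^sub>R w" by (auto simp: span_singleton)
  then have "norm (B v) = norm (B w)" using v(1) w(1) linear_cmul[OF assms] by simp
  then have "minimizes_norm B v" using w(2) unfolding minimizes_norm_def by simp
  then show "\<exists>v. norm v = 1 \<and> minimizes_norm A v \<and> minimizes_norm B v"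
    using v by blast
qed (auto simp: most_contracted_line_def minimizes_norm_def)

section \<open>The tangency equation\<close>

definition tang_P :: "'a::comm_ring_1 \<Rightarrow> 'a" where
  "tang_P t = t\<^sup>2 + t + 1"

definition tang_q :: "'a::comm_ring_1 \<Rightarrow> 'a" where
  "tang_q t = 1 + 2 * t"

definition tang_S :: "real \<Rightarrow> real" where
  "tang_S t = sqrt (3 * (tang_P t)\<^sup>2 + (tang_q t)\<^sup>2)"

definition psi_minus :: "real \<Rightarrow> real" where
  "psi_minus t = (tang_q t - tang_P t - tang_S t) / (2 * tang_P t)"

definition psi_plus :: "real \<Rightarrow> real" where
  "psi_plus t = (tang_q t - tang_P t + tang_S t) / (2 * tang_P t)"

lemma tang_P_of_real: "tang_P (of_real t) = of_real (tang_P t)"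
  and tang_q_of_real: "tang_q (of_real t) = of_real (tang_q t)"
  by (simp_all add: tang_P_def tang_q_def)

lemma tang_P_pos: "0 < tang_P (t::real)"
proof -
  have "tang_P t = (t + 1/2)\<^sup>2 + 3/4" by (simp add: tang_P_def power2_eq_square algebra_simps)
  then show ?thesis by (simp add: add_nonneg_pos)
qed

lemma tang_S_gt_abs_q: "\<bar>tang_q t\<bar> < tang_S t"
proof -
  have "sqrt ((tang_q t)\<^sup>2) < tang_S t"
    unfolding tang_S_def using tang_P_pos[of t] by (intro real_sqrt_less_mono) simp
  then show ?thesis by simp
qed

lemma psi_minus_psi_plus_scaled:
  "(1 + 2 * psi_minus t) * tang_P t = tang_q t - tang_S t"
  "(1 + 2 * psi_plus t) * tang_P t = tang_q t + tang_S t"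
  using tang_P_pos[of t] by (simp_all add: psi_minus_def psi_plus_def field_simps)

lemma tang_quadratic_iff:
  fixes p t :: real
  shows "(1 - 2*p - 2*p\<^sup>2) * tang_P t = - (1 + 2*p) * tang_q t \<longleftrightarrow> p = psi_minus t \<or> p = psi_plus t"
proof -
  define P q S where "P = tang_P t" and "q = tang_q t" and "S = tang_S t"
  have P: "0 < P" unfolding P_def by (rule tang_P_pos)
  have S2: "S\<^sup>2 = 3 * P\<^sup>2 + q\<^sup>2" unfolding S_def tang_S_def P_def q_def by simp
  define X where "X = (1 + 2*p) * P - q"
  have diff: "X\<^sup>2 - S\<^sup>2 = - 2 * P * ((1 - 2*p - 2*p\<^sup>2) * P + (1 + 2*p) * q)"
    unfolding S2 X_def by (simp add: algebra_simps power2_eq_square)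
  have "(1 - 2*p - 2*p\<^sup>2) * P = - (1 + 2*p) * q \<longleftrightarrow> (1 - 2*p - 2*p\<^sup>2) * P + (1 + 2*p) * q = 0"
    by (auto simp: algebra_simps)
  also have "\<dots> \<longleftrightarrow> X\<^sup>2 = S\<^sup>2"
    using diff P by auto
  also have "\<dots> \<longleftrightarrow> X = - S \<or> X = S"
    by (auto simp: power2_eq_iff)
  also have "X = - S \<longleftrightarrow> (1 + 2*p) * P = (1 + 2 * psi_minus t) * P"
    using psi_minus_psi_plus_scaled(1)[of t] by (auto simp: X_def P_def q_def S_def)
  also have "X = S \<longleftrightarrow> (1 + 2*p) * P = (1 + 2 * psi_plus t) * P"
    using psi_minus_psi_plus_scaled(2)[of t] by (auto simp: X_def P_def q_def S_def)
  finally show ?thesis using P by (simp add: P_def q_def)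
qed

lemma codirectional_iff_eq_psi_minus:
  fixes p t :: real
  shows "((1 - 2*p - 2*p\<^sup>2) / 2) * (- tang_P t) = (1 + 2*p) * (tang_q t / 2) \<and>
         0 < ((1 - 2*p - 2*p\<^sup>2) / 2) * (tang_q t / 2) + (1 + 2*p) * (- tang_P t)
     \<longleftrightarrow> p = psi_minus t"
proof -
  define P q where "P = tang_P t" and "q = tang_q t"
  have P: "0 < P" unfolding P_def by (rule tang_P_pos)
  have root: "((1 - 2*p - 2*p\<^sup>2) / 2) * (- P) = (1 + 2*p) * (q / 2) \<longleftrightarrow> p = psi_minus t \<or> p = psi_plus t"
    using tang_quadratic_iff[of p t] by (auto simp: P_def q_def algebra_simps)
  define D where "D = ((1 - 2*p - 2*p\<^sup>2) / 2) * (q / 2) + (1 + 2*p) * (- P)"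
  have D: "D * P = - (1 + 2*p) * (q\<^sup>2 / 4 + P\<^sup>2)" if "p = psi_minus t \<or> p = psi_plus t"
  proof -
    have "D * P = ((1 - 2*p - 2*p\<^sup>2) * P) * q / 4 - (1 + 2*p) * P\<^sup>2"
      by (simp add: D_def field_simps power2_eq_square)
    also have "(1 - 2*p - 2*p\<^sup>2) * P = - (1 + 2*p) * q"
      using that tang_quadratic_iff[of p t] by (simp add: P_def q_def)
    finally show ?thesis by (simp add: algebra_simps power2_eq_square)
  qed
  have pos: "0 < q\<^sup>2 / 4 + P\<^sup>2" using P by (simp add: add_nonneg_pos)
  have "(1 + 2 * psi_minus t) * P < 0" "0 < (1 + 2 * psi_plus t) * P"
    using psi_minus_psi_plus_scaled[of t] tang_S_gt_abs_q[of t] by (auto simp: P_def abs_less_iff)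
  then have sign: "1 + 2 * psi_minus t < 0" "0 < 1 + 2 * psi_plus t"
    using P by (simp_all add: mult_less_0_iff zero_less_mult_iff)
  have "(p = psi_minus t \<or> p = psi_plus t) \<and> 0 < D \<longleftrightarrow> p = psi_minus t"
  proof (cases "p = psi_minus t")
    case True
    then have "0 < D * P" using D sign(1) pos by (simp add: mult_neg_pos)
    then show ?thesis using True P by (simp add: zero_less_mult_iff)
  next
    case False
    moreover have "p = psi_plus t \<Longrightarrow> D * P < 0" using D sign(2) pos by (simp add: mult_neg_pos)
    ultimately show ?thesis using P by (auto simp: mult_less_0_iff)
  qed
  then show ?thesis using root by (simp add: D_def P_def q_def)
qed

lemma power2_norm_Pair: "(norm (a::real, b::real))\<^sup>2 = a\<^sup>2 + b\<^sup>2"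
  by (simp add: norm_Pair)

lemma has_derivative_std_map_lift:
  "(std_map_lift k has_derivative
     (\<lambda>h. (fst h + psi_c k y * snd h, fst h + snd h + psi_c k y * snd h))) (at (x, y))"
  unfolding std_map_lift_def Let_def psi_c_def
  by (rule has_derivative_eq_rhs, (rule derivative_eq_intros refl)+) (auto simp: fun_eq_iff algebra_simps)

lemma has_derivative_std_map_inv_lift:
  "(std_map_inv_lift k has_derivative
     (\<lambda>h. (fst h - psi_c k (y - x) * (snd h - fst h), snd h - fst h))) (at (x, y))"
  unfolding std_map_inv_lift_def Let_def psi_c_def
  by (rule has_derivative_eq_rhs, (rule derivative_eq_intros refl)+) (auto simp: fun_eq_iff algebra_simps)

lemma tangency_iff:
  "(\<exists>L. e_plus k (x, y) L \<and> e_minus k (x, y) L) \<longleftrightarrow> psi_c k y = psi_minus (psi_c k (y - x))"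
proof -
  define p where "p = psi_c k y"
  define t where "t = psi_c k (y - x)"
  define A where "A = (\<lambda>h::real \<times> real. (fst h + p * snd h, fst h + snd h + p * snd h))"
  define B where "B = (\<lambda>h::real \<times> real. (fst h - t * (snd h - fst h), snd h - fst h))"
  have dA: "(std_map_lift k has_derivative A) (at (x, y))"
    unfolding A_def p_def by (rule has_derivative_std_map_lift)
  have dB: "(std_map_inv_lift k has_derivative B) (at (x, y))"
    unfolding B_def t_def by (rule has_derivative_std_map_inv_lift)
  have QA: "(norm (A (a, b)))\<^sup>2 = ((2 + p\<^sup>2 + (1 + p)\<^sup>2) / 2) * (a\<^sup>2 + b\<^sup>2)
      + ((1 - 2*p - 2*p\<^sup>2) / 2) * (a\<^sup>2 - b\<^sup>2) + (1 + 2*p) * (2 * a * b)" for a b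
    unfolding A_def power2_norm_Pair by (simp add: power2_eq_square field_simps)
  have QB: "(norm (B (a, b)))\<^sup>2 = (((1 + t)\<^sup>2 + 1 + t\<^sup>2 + 1) / 2) * (a\<^sup>2 + b\<^sup>2)
      + (tang_q t / 2) * (a\<^sup>2 - b\<^sup>2) + (- tang_P t) * (2 * a * b)" for a b
    unfolding B_def tang_P_def tang_q_def power2_norm_Pair by (simp add: power2_eq_square field_simps)
  have nA: "((1 - 2*p - 2*p\<^sup>2) / 2, 1 + 2*p) \<noteq> 0"
    by (cases "p = - 1/2") (auto simp: zero_prod_def power2_eq_square)
  have nB: "(tang_q t / 2, - tang_P t) \<noteq> 0"
    using tang_P_pos[of t] by (simp add: zero_prod_def)
  have "(\<exists>L. e_plus k (x, y) L \<and> e_minus k (x, y) L) \<longleftrightarrow>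
        (\<exists>L. most_contracted_line A L \<and> most_contracted_line B L)"
    unfolding e_plus_def e_minus_def
    using has_derivative_unique[OF dA] has_derivative_unique[OF dB] dA dB by metis
  also have "\<dots> \<longleftrightarrow> (\<exists>v. norm v = 1 \<and> minimizes_norm A v \<and> minimizes_norm B v)"
    using dB by (intro common_most_contracted_line_iff bounded_linear.linear has_derivative_bounded_linear)
  also have "\<dots> \<longleftrightarrow> p = psi_minus t"
    unfolding exists_common_minimizer_iff[OF QA QB nA nB] by (rule codirectional_iff_eq_psi_minus)
  finally show ?thesis unfolding p_def t_def .
qed

section \<open>Bounds on the two roots\<close>

lemma psi_minus_ge_iff: "c \<le> psi_minus t \<longleftrightarrow> tang_S t \<le> tang_q t - (1 + 2 * c) * tang_P t"
  unfolding psi_minus_def using tang_P_pos[of t] by (simp add: le_divide_eq algebra_simps)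

lemma psi_minus_le_iff: "psi_minus t \<le> c \<longleftrightarrow> tang_q t - (1 + 2 * c) * tang_P t \<le> tang_S t"
  unfolding psi_minus_def using tang_P_pos[of t] by (simp add: divide_le_eq algebra_simps)

lemma psi_minus_less_iff: "psi_minus t < c \<longleftrightarrow> tang_q t - (1 + 2 * c) * tang_P t < tang_S t"
  unfolding psi_minus_def using tang_P_pos[of t] by (simp add: divide_less_eq algebra_simps)

lemma psi_plus_greater_iff: "c < psi_plus t \<longleftrightarrow> (1 + 2 * c) * tang_P t - tang_q t < tang_S t"
  unfolding psi_plus_def using tang_P_pos[of t] by (simp add: less_divide_eq algebra_simps)

lemma psi_minus_ge_if_q_nonneg:
  assumes "0 \<le> tang_q t"
  shows "- (1 + sqrt 3) / 2 \<le> psi_minus t"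
proof -
  have "3 * (tang_P t)\<^sup>2 + (tang_q t)\<^sup>2 \<le> (tang_q t + sqrt 3 * tang_P t)\<^sup>2"
    using assms tang_P_pos[of t] by (simp add: power2_eq_square algebra_simps)
  then have "tang_S t \<le> tang_q t + sqrt 3 * tang_P t"
    unfolding tang_S_def using assms tang_P_pos[of t] by (intro real_le_lsqrt) simp_all
  then show ?thesis unfolding psi_minus_ge_iff by (simp add: field_simps)
qed

lemma psi_minus_le: "psi_minus t \<le> - (1 - sqrt 3) / 2"
proof -
  have "0 \<le> sqrt 3 * tang_P t" using tang_P_pos[of t] by simp
  then have "tang_q t - sqrt 3 * tang_P t \<le> tang_S t"
    using tang_S_gt_abs_q[of t] by (simp add: abs_less_iff)
  then show ?thesis unfolding psi_minus_le_iff by (simp add: field_simps)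
qed

lemma psi_plus_gt_if_q_pos:
  assumes "0 < tang_q t"
  shows "- (1 - sqrt 3) / 2 < psi_plus t"
proof -
  have "(sqrt 3 * tang_P t - tang_q t)\<^sup>2 < 3 * (tang_P t)\<^sup>2 + (tang_q t)\<^sup>2"
    using assms tang_P_pos[of t] by (simp add: power2_eq_square algebra_simps)
  then have "sqrt 3 * tang_P t - tang_q t < tang_S t"
    unfolding tang_S_def by (rule real_less_rsqrt)
  then show ?thesis unfolding psi_plus_greater_iff by (simp add: field_simps)
qed

lemma psi_minus_lt_if_q_neg:
  assumes "tang_q t < 0"
  shows "psi_minus t < - (1 + sqrt 3) / 2"
proof -
  have "(tang_q t + sqrt 3 * tang_P t)\<^sup>2 < 3 * (tang_P t)\<^sup>2 + (tang_q t)\<^sup>2"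
    using mult_pos_neg[OF tang_P_pos[of t] mult_neg_pos[OF assms, of "sqrt 3"]]
    by (simp add: power2_eq_square algebra_simps)
  then have "tang_q t + sqrt 3 * tang_P t < tang_S t"
    unfolding tang_S_def by (rule real_less_rsqrt)
  then show ?thesis unfolding psi_minus_less_iff by (simp add: field_simps)
qed

lemma psi_plus_gt: "- (1 + sqrt 3) / 2 < psi_plus t"
proof -
  have "0 \<le> sqrt 3 * tang_P t" using tang_P_pos[of t] by simp
  then have "- sqrt 3 * tang_P t - tang_q t < tang_S t"
    using tang_S_gt_abs_q[of t] by (simp add: abs_less_iff)
  then show ?thesis unfolding psi_plus_greater_iff by (simp add: field_simps)
qed

lemma psi_root_between_iff:
  assumes "0 < tang_q t"
  shows "(v = psi_minus t \<or> v = psi_plus t) \<and> - (1 + sqrt 3) / 2 \<le> v \<and> v \<le> - (1 - sqrt 3) / 2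
    \<longleftrightarrow> v = psi_minus t"
  using psi_minus_ge_if_q_nonneg[of t] psi_minus_le[of t] psi_plus_gt_if_q_pos[OF assms] assms by auto

lemma psi_root_le_iff:
  assumes "tang_q t < 0"
  shows "(v = psi_minus t \<or> v = psi_plus t) \<and> v \<le> - (1 + sqrt 3) / 2 \<longleftrightarrow> v = psi_minus t"
  using psi_minus_lt_if_q_neg[OF assms] psi_plus_gt[of t] by auto

lemma abs_sqrt3_tang_q_le: "\<bar>sqrt 3 * tang_q t\<bar> \<le> 4 * tang_P (t::real)"
proof -
  have "16 * (tang_P t)\<^sup>2 - 3 * (tang_q t)\<^sup>2 = (4 * tang_P t - 3/2)\<^sup>2 + 27/4"
    by (simp add: tang_P_def tang_q_def power2_eq_square algebra_simps)
  then have "3 * (tang_q t)\<^sup>2 \<le> 16 * (tang_P t)\<^sup>2"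
    using zero_le_power2[of "4 * tang_P t - 3/2"] by linarith
  then have "(sqrt 3 * tang_q t)\<^sup>2 \<le> (4 * tang_P t)\<^sup>2"
    by (simp add: power_mult_distrib)
  then have "\<bar>sqrt 3 * tang_q t\<bar> \<le> \<bar>4 * tang_P t\<bar>" by (simp only: abs_le_square_iff)
  then show ?thesis using tang_P_pos[of t] by simp
qed

lemma psi_minus_lower_bound: "- (1 + 3 * sqrt 3) / 2 \<le> psi_minus t"
proof -
  define P q r where "P = tang_P t" and "q = tang_q t" and "r = sqrt (3::real)"
  have P: "0 < P" and r: "r\<^sup>2 = 3" "0 < r" and rq: "- 4 * P \<le> r * q"
    using tang_P_pos[of t] abs_sqrt3_tang_q_le[of t] by (auto simp: P_def q_def r_def abs_le_iff)
  have "3 * P\<^sup>2 + q\<^sup>2 \<le> (q + 3 * r * P)\<^sup>2"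
  proof -
    have "P * (- 4 * P) \<le> P * (r * q)" using rq P by (intro mult_left_mono) auto
    then have "- 4 * P\<^sup>2 \<le> P * (r * q)" by (simp add: power2_eq_square)
    moreover have "(q + 3 * r * P)\<^sup>2 = q\<^sup>2 + 6 * (P * (r * q)) + 9 * r\<^sup>2 * P\<^sup>2"
      by (simp add: power2_eq_square algebra_simps)
    ultimately show ?thesis unfolding r(1) by linarith
  qed
  moreover have "0 \<le> q + 3 * r * P"
  proof -
    have "r * (q + 3 * r * P) = r * q + 9 * P" using r by (simp add: algebra_simps power2_eq_square)
    then have "0 < r * (q + 3 * r * P)" using rq P by linarith
    then show ?thesis using r by (simp add: zero_less_mult_iff)
  qed
  ultimately have "tang_S t \<le> q + 3 * r * P"
    unfolding tang_S_def P_def[symmetric] q_def[symmetric] by (intro real_le_lsqrt)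
  then show ?thesis unfolding psi_minus_ge_iff P_def[symmetric] q_def[symmetric] r_def[symmetric]
    by (simp add: field_simps)
qed

lemma psi_minus_upper_bound: "psi_minus t \<le> - (1 + sqrt 3 / 3) / 2"
proof -
  define P q r where "P = tang_P t" and "q = tang_q t" and "r = sqrt (3::real)"
  have P: "0 < P" and r: "r\<^sup>2 = 3" and rq: "r * q \<le> 4 * P"
    using tang_P_pos[of t] abs_sqrt3_tang_q_le[of t] by (auto simp: P_def q_def r_def abs_le_iff)
  have "P * (r * q) \<le> P * (4 * P)" using rq P by (intro mult_left_mono) auto
  then have "P * (r * q) \<le> 4 * P\<^sup>2" by (simp add: power2_eq_square)
  moreover have "(q + r / 3 * P)\<^sup>2 = q\<^sup>2 + 2/3 * (P * (r * q)) + r\<^sup>2 / 9 * P\<^sup>2"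
    by (simp add: power2_eq_square field_simps)
  ultimately have "(q + r / 3 * P)\<^sup>2 \<le> 3 * P\<^sup>2 + q\<^sup>2" unfolding r(1) by linarith
  then have "q + r / 3 * P \<le> tang_S t"
    unfolding tang_S_def P_def[symmetric] q_def[symmetric] by (rule real_le_rsqrt)
  then show ?thesis unfolding psi_minus_le_iff P_def[symmetric] q_def[symmetric] r_def[symmetric]
    by (simp add: field_simps)
qed

section \<open>Location of the tangencies\<close>

lemma psi_c_one_minus: "psi_c k (1 - y) = psi_c k y"
  by (simp add: psi_c_def right_diff_distrib cos_diff)

lemma psi_c_add_of_int: "psi_c k (y + of_int n) = psi_c k y"
  by (simp add: psi_c_def distrib_left cos_add)

lemma psi_c_frac: "psi_c k (frac y) = psi_c k y"
  using psi_c_add_of_int[of k y "- \<lfloor>y\<rfloor>"] by (simp add: frac_def)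

definition psi_threshold :: "real \<Rightarrow> real \<Rightarrow> real" where
  "psi_threshold k a = arccos (- a / (4 * pi * k)) / (2 * pi)"

lemma psi_threshold_spec:
  assumes "0 < k" "\<bar>a\<bar> \<le> 4 * pi * k"
  shows "psi_c k (psi_threshold k a) = - a / 2"
    and "0 \<le> psi_threshold k a" "psi_threshold k a \<le> 1/2"
proof -
  define c where "c = - a / (4 * pi * k)"
  have "\<bar>c\<bar> \<le> 1"
    using assms by (simp add: c_def abs_divide divide_le_eq_1)
  then have c: "-1 \<le> c" "c \<le> 1" by auto
  have d: "psi_threshold k a = arccos c / (2 * pi)"
    by (simp add: psi_threshold_def c_def)
  show "psi_c k (psi_threshold k a) = - a / 2"
    using assms(1) c by (simp add: psi_c_def d c_def field_simps)
  show "0 \<le> psi_threshold k a" "psi_threshold k a \<le> 1/2"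
    using arccos_bounded[OF c] by (simp_all add: d divide_le_eq)
qed

lemma psi_c_le_psi_c_iff:
  assumes "0 < k" "0 \<le> u" "u \<le> 1/2" "0 \<le> v" "v \<le> 1/2"
  shows "psi_c k u \<le> psi_c k v \<longleftrightarrow> v \<le> u"
  using assms cos_mono_le_eq[of "2 * pi * u" "2 * pi * v"] by (simp add: psi_c_def)

lemma psi_c_le_iff:
  assumes "0 < k" "\<bar>a\<bar> \<le> 4 * pi * k" "0 \<le> y" "y < 1"
  shows "psi_c k y \<le> - a / 2 \<longleftrightarrow> psi_threshold k a \<le> y \<and> y \<le> 1 - psi_threshold k a"
proof -
  note d = psi_threshold_spec[OF assms(1,2)]
  show ?thesis
  proof (cases "y \<le> 1/2")
    case True
    then show ?thesis
      using psi_c_le_psi_c_iff[OF assms(1,3) True d(2,3)] d by auto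
  next
    case False
    then have "psi_c k (1 - y) \<le> psi_c k (psi_threshold k a) \<longleftrightarrow> psi_threshold k a \<le> 1 - y"
      using assms(4) d by (intro psi_c_le_psi_c_iff[OF assms(1)]) auto
    then show ?thesis using False d by (auto simp: psi_c_one_minus)
  qed
qed

lemma le_psi_c_iff:
  assumes "0 < k" "\<bar>a\<bar> \<le> 4 * pi * k" "0 \<le> y" "y < 1"
  shows "- a / 2 \<le> psi_c k y \<longleftrightarrow> y \<le> psi_threshold k a \<or> 1 - psi_threshold k a \<le> y"
proof -
  note d = psi_threshold_spec[OF assms(1,2)]
  show ?thesis
  proof (cases "y \<le> 1/2")
    case True
    then show ?thesis
      using psi_c_le_psi_c_iff[OF assms(1) d(2,3) assms(3) True] d by auto
  next
    case False
    then have "psi_c k (psi_threshold k a) \<le> psi_c k (1 - y) \<longleftrightarrow> 1 - y \<le> psi_threshold k a"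
      using assms(4) d by (intro psi_c_le_psi_c_iff[OF assms(1)]) auto
    then show ?thesis using False d by (auto simp: psi_c_one_minus)
  qed
qed

lemma psi_c_between_iff:
  assumes "0 < k" "\<bar>a1\<bar> \<le> 4 * pi * k" "\<bar>a2\<bar> \<le> 4 * pi * k" "0 \<le> y" "y < 1"
  shows "- a1 / 2 \<le> psi_c k y \<and> psi_c k y \<le> - a2 / 2 \<longleftrightarrow>
    y \<in> {psi_threshold k a2 .. psi_threshold k a1} \<union> {1 - psi_threshold k a1 .. 1 - psi_threshold k a2}"
  using le_psi_c_iff[OF assms(1,2,4,5)] psi_c_le_iff[OF assms(1,3,4,5)]
    psi_threshold_spec(3)[OF assms(1,2)] psi_threshold_spec(3)[OF assms(1,3)] by auto

lemma delta_eq_psi_threshold: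
  "delta_star k = psi_threshold k 1"
  "delta_plus k = psi_threshold k (1 + sqrt 3)"
  "delta_minus k = psi_threshold k (1 - sqrt 3)"
  "delta_hat_T_plus k = psi_threshold k (1 + 3 * sqrt 3)"
  "delta_hat_T_minus k = psi_threshold k (1 + sqrt 3 / 3)"
  by (simp_all add: psi_threshold_def delta_star_def delta_plus_def delta_minus_def
      delta_hat_T_plus_def delta_hat_T_minus_def)

lemma threshold_parameters_admissible:
  assumes "1 \<le> k"
  shows "\<bar>1\<bar> \<le> 4 * pi * k" "\<bar>1 + sqrt 3\<bar> \<le> 4 * pi * k" "\<bar>1 - sqrt 3\<bar> \<le> 4 * pi * k"
    "\<bar>1 + 3 * sqrt 3\<bar> \<le> 4 * pi * k" "\<bar>1 + sqrt 3 / 3\<bar> \<le> 4 * pi * k"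
proof -
  have "12 \<le> 4 * pi * k"
    using pi_gt3 mult_mono[OF _ assms, of 3 pi] by linarith
  moreover have "sqrt 3 < (2::real)" by (rule real_less_lsqrt) auto
  ultimately show "\<bar>1\<bar> \<le> 4 * pi * k" "\<bar>1 + sqrt 3\<bar> \<le> 4 * pi * k" "\<bar>1 - sqrt 3\<bar> \<le> 4 * pi * k"
    "\<bar>1 + 3 * sqrt 3\<bar> \<le> 4 * pi * k" "\<bar>1 + sqrt 3 / 3\<bar> \<le> 4 * pi * k"
    by (auto simp: abs_le_iff)
qed

lemma mem_tangency_set_iff:
  "(x, y) \<in> tangency_set k \<longleftrightarrow> (x, y) \<in> torus_rep \<and> psi_c k y = psi_minus (psi_c k (y - x))"
  unfolding tangency_set_def using tangency_iff by blast

lemma tangency_set_subset_Delta_hat_T: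
  assumes "1 \<le> k"
  shows "tangency_set k \<subseteq> Delta_hat_T k"
proof
  fix z assume "z \<in> tangency_set k"
  moreover obtain x y where z: "z = (x, y)" by (cases z)
  ultimately have y: "0 \<le> y" "y < 1" and eq: "psi_c k y = psi_minus (psi_c k (y - x))"
    by (auto simp: mem_tangency_set_iff torus_rep_def)
  have "- (1 + 3 * sqrt 3) / 2 \<le> psi_c k y \<and> psi_c k y \<le> - (1 + sqrt 3 / 3) / 2"
    unfolding eq using psi_minus_lower_bound psi_minus_upper_bound by blast
  then have "y \<in> {psi_threshold k (1 + sqrt 3 / 3) .. psi_threshold k (1 + 3 * sqrt 3)}
      \<union> {1 - psi_threshold k (1 + 3 * sqrt 3) .. 1 - psi_threshold k (1 + sqrt 3 / 3)}"
    using psi_c_between_iff[OF _ threshold_parameters_admissible(4,5)[OF assms] y] assms by simp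
  then show "z \<in> Delta_hat_T k"
    by (simp add: z Delta_hat_T_def delta_eq_psi_threshold)
qed

lemma phi_roots_eq_psi_roots:
  fixes t :: real
  assumes q: "tang_q t \<noteq> 0"
  defines "\<phi> \<equiv> - 2 * tang_P t / tang_q t"
  shows "{(- (\<phi> + 2) + sqrt (3 * \<phi>\<^sup>2 + 4)) / (2 * \<phi>), (- (\<phi> + 2) - sqrt (3 * \<phi>\<^sup>2 + 4)) / (2 * \<phi>)}
       = {psi_minus t, psi_plus t}"
proof -
  define P q S where "P = tang_P t" and "q = tang_q t" and "S = tang_S t"
  have P: "0 < P" unfolding P_def by (rule tang_P_pos)
  have S: "0 \<le> S" "S\<^sup>2 = 3 * P\<^sup>2 + q\<^sup>2" by (simp_all add: S_def P_def q_def tang_S_def)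
  have "q \<noteq> 0" using assms by (simp add: q_def)
  have "3 * \<phi>\<^sup>2 + 4 = (2 * S / q)\<^sup>2"
    using \<open>q \<noteq> 0\<close> S by (simp add: \<phi>_def P_def[symmetric] q_def[symmetric] power_divide field_simps power2_eq_square)
  then have sqrt: "sqrt (3 * \<phi>\<^sup>2 + 4) = \<bar>2 * S / q\<bar>" by simp
  have "(- (\<phi> + 2) + 2 * S / q) / (2 * \<phi>) = psi_minus t"
       "(- (\<phi> + 2) - 2 * S / q) / (2 * \<phi>) = psi_plus t"
    unfolding psi_minus_def psi_plus_def \<phi>_def P_def[symmetric] q_def[symmetric] S_def[symmetric]
    using \<open>q \<noteq> 0\<close> P by (simp_all add: field_simps)
  then show ?thesis unfolding sqrt using S(1) by (cases "0 < q") (auto simp: abs_if divide_nonneg_neg)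
qed

lemma mem_Phi_set_iff:
  assumes "tang_q (psi_c k yt) \<noteq> 0"
  shows "y \<in> Phi_set k yt \<longleftrightarrow> 0 \<le> y \<and> y < 1 \<and>
    (psi_c k y = psi_minus (psi_c k yt) \<or> psi_c k y = psi_plus (psi_c k yt))"
proof -
  have "phi_t k yt = - 2 * tang_P (psi_c k yt) / tang_q (psi_c k yt)"
    by (simp add: phi_t_def tang_P_def tang_q_def)
  then have "psi_c k y \<in> {(- (phi_t k yt + 2) + sqrt (3 * (phi_t k yt)\<^sup>2 + 4)) / (2 * phi_t k yt),
                           (- (phi_t k yt + 2) - sqrt (3 * (phi_t k yt)\<^sup>2 + 4)) / (2 * phi_t k yt)}
      \<longleftrightarrow> psi_c k y \<in> {psi_minus (psi_c k yt), psi_plus (psi_c k yt)}"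
    using phi_roots_eq_psi_roots[OF assms] by simp
  then show ?thesis unfolding Phi_set_def Let_def psi_c_def by auto
qed

lemma tang_q_sign:
  assumes "1 \<le> k" "0 \<le> yt" "yt < 1" "yt \<notin> {delta_star k, 1 - delta_star k}"
  shows "tang_q (psi_c k yt) \<noteq> 0"
    and "0 < tang_q (psi_c k yt) \<longleftrightarrow> yt \<in> {0..delta_star k} \<union> {1 - delta_star k..1}"
proof -
  have k: "0 < k" using assms(1) by simp
  have ge: "0 \<le> tang_q (psi_c k yt) \<longleftrightarrow> yt \<le> delta_star k \<or> 1 - delta_star k \<le> yt"
    using le_psi_c_iff[OF k threshold_parameters_admissible(1)[OF assms(1)] assms(2,3)]
    by (auto simp: tang_q_def delta_eq_psi_threshold)
  moreover have "tang_q (psi_c k yt) \<le> 0 \<longleftrightarrow> delta_star k \<le> yt \<and> yt \<le> 1 - delta_star k"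
    using psi_c_le_iff[OF k threshold_parameters_admissible(1)[OF assms(1)] assms(2,3)]
    by (auto simp: tang_q_def delta_eq_psi_threshold)
  ultimately show q: "tang_q (psi_c k yt) \<noteq> 0" using assms(4) by force
  show "0 < tang_q (psi_c k yt) \<longleftrightarrow> yt \<in> {0..delta_star k} \<union> {1 - delta_star k..1}"
    using ge q assms(2,3) by auto
qed

lemma mem_tangency_set_iff_Gamma_set:
  assumes k: "1 \<le> k" and z: "(x, y) \<in> torus_rep"
    and yt: "frac (y - x) \<notin> {delta_star k, 1 - delta_star k}"
  shows "(x, y) \<in> tangency_set k \<longleftrightarrow> y \<in> Gamma_set k (frac (y - x))"
proof -
  define t where "t = psi_c k (frac (y - x))"
  have y: "0 \<le> y" "y < 1" using z by (auto simp: torus_rep_def)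
  have "0 < k" using k by simp
  note adm = threshold_parameters_admissible[OF k]
  note q = tang_q_sign[OF k frac_ge_0 frac_lt_1 yt, folded t_def]
  have tang: "(x, y) \<in> tangency_set k \<longleftrightarrow> psi_c k y = psi_minus t"
    using z by (simp add: mem_tangency_set_iff t_def psi_c_frac)
  have Phi: "y \<in> Phi_set k (frac (y - x)) \<longleftrightarrow> psi_c k y = psi_minus t \<or> psi_c k y = psi_plus t"
    using mem_Phi_set_iff[OF q(1)[unfolded t_def]] y by (simp add: t_def)
  show ?thesis
  proof (cases "0 < tang_q t")
    case True
    then have "Gamma_set k (frac (y - x)) = Phi_set k (frac (y - x)) \<inter>
        ({delta_minus k..delta_plus k} \<union> {1 - delta_plus k..1 - delta_minus k})"
      using q(2) by (simp add: Gamma_set_def)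
    then have "y \<in> Gamma_set k (frac (y - x)) \<longleftrightarrow>
        (psi_c k y = psi_minus t \<or> psi_c k y = psi_plus t) \<and>
        - (1 + sqrt 3) / 2 \<le> psi_c k y \<and> psi_c k y \<le> - (1 - sqrt 3) / 2"
      using Phi psi_c_between_iff[OF \<open>0 < k\<close> adm(2,3) y] by (simp add: delta_eq_psi_threshold)
    also have "\<dots> \<longleftrightarrow> psi_c k y = psi_minus t"
      by (rule psi_root_between_iff[OF True])
    finally show ?thesis using tang by simp
  next
    case False
    then have "tang_q t < 0" using q(1) by simp
    have "frac (y - x) \<notin> {0..delta_star k} \<union> {1 - delta_star k..1}" using q(2) False by blast
    then have "Gamma_set k (frac (y - x)) = Phi_set k (frac (y - x)) \<inter> {delta_plus k..1 - delta_plus k}"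
      unfolding Gamma_set_def by (simp only: if_False)
    then have "y \<in> Gamma_set k (frac (y - x)) \<longleftrightarrow>
        (psi_c k y = psi_minus t \<or> psi_c k y = psi_plus t) \<and> psi_c k y \<le> - (1 + sqrt 3) / 2"
      using Phi psi_c_le_iff[OF \<open>0 < k\<close> adm(2) y] by (simp add: delta_eq_psi_threshold)
    also have "\<dots> \<longleftrightarrow> psi_c k y = psi_minus t"
      by (rule psi_root_le_iff[OF \<open>tang_q t < 0\<close>])
    finally show ?thesis using tang by simp
  qed
qed

section \<open>Smoothness of the tangency curves\<close>

lemma has_vector_derivative_Re_holomorphic:
  assumes "H holomorphic_on U" "open U" "complex_of_real s \<in> U"
  shows "((\<lambda>s. Re (H (of_real s))) has_vector_derivative Re (deriv H (of_real s))) (at s)"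
proof -
  have "((\<lambda>x. H (of_real x)) has_vector_derivative deriv H (of_real s)) (at s)"
    using holomorphic_derivI[OF assms] by (rule has_vector_derivative_real_field)
  then show ?thesis
    by (simp add: has_real_derivative_iff_has_vector_derivative[symmetric] has_field_derivative_Re)
qed

lemma nth_vderiv_Re_holomorphic:
  fixes F1 F2 :: "complex \<Rightarrow> complex"
  assumes "F1 holomorphic_on U" "F2 holomorphic_on U" "open U" "\<And>s. complex_of_real s \<in> U"
  shows "nth_vderiv n (\<lambda>s. (Re (F1 (of_real s)), Re (F2 (of_real s)))) =
         (\<lambda>s. (Re ((deriv ^^ n) F1 (of_real s)), Re ((deriv ^^ n) F2 (of_real s))))"
    and "((\<lambda>s. (Re ((deriv ^^ n) F1 (of_real s)), Re ((deriv ^^ n) F2 (of_real s)))) has_vector_derivative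
          (Re ((deriv ^^ Suc n) F1 (of_real t)), Re ((deriv ^^ Suc n) F2 (of_real t)))) (at t)"
proof -
  have vderiv: "((\<lambda>s. (Re ((deriv ^^ m) F1 (of_real s)), Re ((deriv ^^ m) F2 (of_real s)))) has_vector_derivative
          (Re ((deriv ^^ Suc m) F1 (of_real t)), Re ((deriv ^^ Suc m) F2 (of_real t)))) (at t)" for m t
    using has_vector_derivative_Re_holomorphic[OF holomorphic_higher_deriv[OF assms(1,3)] assms(3,4)]
      has_vector_derivative_Re_holomorphic[OF holomorphic_higher_deriv[OF assms(2,3)] assms(3,4)]
    by (simp add: has_vector_derivative_Pair)
  then show "((\<lambda>s. (Re ((deriv ^^ n) F1 (of_real s)), Re ((deriv ^^ n) F2 (of_real s)))) has_vector_derivative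
          (Re ((deriv ^^ Suc n) F1 (of_real t)), Re ((deriv ^^ Suc n) F2 (of_real t)))) (at t)" .
  show "nth_vderiv n (\<lambda>s. (Re (F1 (of_real s)), Re (F2 (of_real s)))) =
         (\<lambda>s. (Re ((deriv ^^ n) F1 (of_real s)), Re ((deriv ^^ n) F2 (of_real s))))"
    by (induction n) (simp_all add: vector_derivative_at[OF vderiv])
qed

lemma nth_vderiv_Re_holomorphic_differentiable:
  fixes F1 F2 :: "complex \<Rightarrow> complex"
  assumes "F1 holomorphic_on U" "F2 holomorphic_on U" "open U" "\<And>s. complex_of_real s \<in> U"
  shows "nth_vderiv n (\<lambda>s. (Re (F1 (of_real s)), Re (F2 (of_real s)))) differentiable (at t)"
  unfolding nth_vderiv_Re_holomorphic(1)[OF assms]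
  using nth_vderiv_Re_holomorphic(2)[OF assms] by (rule differentiableI_vector)

definition cos_height :: "real \<Rightarrow> real \<Rightarrow> real" where
  "cos_height k s = psi_minus (psi_c k s) / (2 * pi * k)"

definition tangency_height :: "real \<Rightarrow> real \<Rightarrow> real" where
  "tangency_height k s = arccos (cos_height k s) / (2 * pi)"

lemma cos_height_bounds:
  assumes "1 \<le> k"
  shows "-1 < cos_height k s" "cos_height k s < 0"
proof -
  have "pi \<le> pi * k" using assms by simp
  then have K: "6 < 2 * pi * k" using pi_gt3 by linarith
  have s3: "sqrt 3 < (2::real)" by (rule real_less_lsqrt) auto
  have "- 4 < - (1 + 3 * sqrt 3) / (2::real)" using s3 by (simp add: field_simps)
  then have "- (2 * pi * k) < psi_minus (psi_c k s)"
    using psi_minus_lower_bound[of "psi_c k s"] K by linarith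
  then show "-1 < cos_height k s" using K by (simp add: cos_height_def less_divide_eq)
  have "0 < 1 + sqrt 3 / (3::real)" by (simp add: add_pos_nonneg)
  then have "- (1 + sqrt 3 / 3) / 2 < (0::real)" by simp
  then have "psi_minus (psi_c k s) < 0" using psi_minus_upper_bound[of "psi_c k s"] by linarith
  then show "cos_height k s < 0" using K by (simp add: cos_height_def divide_neg_pos)
qed

lemma tangency_height_bounds:
  assumes "1 \<le> k"
  shows "0 < tangency_height k s" "tangency_height k s < 1/2"
proof -
  note c = cos_height_bounds[OF assms, of s]
  have "arccos 1 < arccos (cos_height k s)" using c by (subst arccos_less_mono) auto
  then show "0 < tangency_height k s" by (simp add: tangency_height_def)
  have "arccos (cos_height k s) < arccos (-1)" using c by (subst arccos_less_mono) auto
  then show "tangency_height k s < 1/2" by (simp add: tangency_height_def divide_less_eq)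
qed

lemma psi_c_tangency_height:
  assumes "1 \<le> k"
  shows "psi_c k (tangency_height k s) = psi_minus (psi_c k s)"
proof -
  have "cos (2 * pi * tangency_height k s) = cos_height k s"
    using cos_height_bounds[OF assms, of s] by (simp add: tangency_height_def)
  then show ?thesis using assms by (simp add: psi_c_def cos_height_def)
qed

definition psi_c_complex :: "real \<Rightarrow> complex \<Rightarrow> complex" where
  "psi_c_complex k z = of_real (2 * pi * k) * cos (2 * of_real pi * z)"

definition psi_minus_complex :: "complex \<Rightarrow> complex" where
  "psi_minus_complex w =
     (tang_q w - tang_P w - csqrt (3 * (tang_P w)\<^sup>2 + (tang_q w)\<^sup>2)) / (2 * tang_P w)"

definition cos_height_complex :: "real \<Rightarrow> complex \<Rightarrow> complex" where
  "cos_height_complex k z = psi_minus_complex (psi_c_complex k z) / of_real (2 * pi * k)"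

definition tangency_height_complex :: "real \<Rightarrow> complex \<Rightarrow> complex" where
  "tangency_height_complex k z = Arccos (cos_height_complex k z) / (2 * of_real pi)"

definition sqrt_domain :: "real \<Rightarrow> complex set" where
  "sqrt_domain k = {z. 0 < Re (3 * (tang_P (psi_c_complex k z))\<^sup>2 + (tang_q (psi_c_complex k z))\<^sup>2)
                        \<and> tang_P (psi_c_complex k z) \<noteq> 0}"

definition height_domain :: "real \<Rightarrow> complex set" where
  "height_domain k = sqrt_domain k \<inter> cos_height_complex k -` {w. \<bar>Re w\<bar> < 1}"

lemma psi_c_complex_of_real: "psi_c_complex k (of_real s) = of_real (psi_c k s)"
  by (simp add: psi_c_complex_def psi_c_def cos_of_real[symmetric])

lemma psi_minus_complex_of_real: "psi_minus_complex (of_real t) = of_real (psi_minus t)"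
proof -
  have "3 * (tang_P (complex_of_real t))\<^sup>2 + (tang_q (complex_of_real t))\<^sup>2
      = of_real (3 * (tang_P t)\<^sup>2 + (tang_q t)\<^sup>2)"
    by (simp add: tang_P_of_real tang_q_of_real)
  then show ?thesis
    by (simp add: psi_minus_complex_def psi_minus_def tang_S_def csqrt_of_real_nonneg
        tang_P_of_real tang_q_of_real)
qed

lemma cos_height_complex_of_real: "cos_height_complex k (of_real s) = of_real (cos_height k s)"
  by (simp add: cos_height_complex_def cos_height_def psi_c_complex_of_real psi_minus_complex_of_real)

lemma tang_P_psi_c_complex_holomorphic: "(\<lambda>z. tang_P (psi_c_complex k z)) holomorphic_on A"
  and tang_q_psi_c_complex_holomorphic: "(\<lambda>z. tang_q (psi_c_complex k z)) holomorphic_on A"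
  unfolding tang_P_def tang_q_def psi_c_complex_def by (intro holomorphic_intros)+

lemma cos_height_complex_holomorphic: "cos_height_complex k holomorphic_on sqrt_domain k"
proof -
  have "3 * (tang_P (psi_c_complex k z))\<^sup>2 + (tang_q (psi_c_complex k z))\<^sup>2 \<notin> \<real>\<^sub>\<le>\<^sub>0"
    and "2 * tang_P (psi_c_complex k z) \<noteq> 0" if "z \<in> sqrt_domain k" for z
    using that by (auto simp: sqrt_domain_def complex_nonpos_Reals_iff)
  then show ?thesis
    unfolding cos_height_complex_def psi_minus_complex_def
    by (intro holomorphic_intros tang_P_psi_c_complex_holomorphic tang_q_psi_c_complex_holomorphic) auto
qed

lemma open_sqrt_domain: "open (sqrt_domain k)"
proof -
  have "continuous_on UNIV (\<lambda>z. tang_P (psi_c_complex k z))"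
    and "continuous_on UNIV (\<lambda>z. tang_q (psi_c_complex k z))"
    by (intro holomorphic_on_imp_continuous_on tang_P_psi_c_complex_holomorphic
        tang_q_psi_c_complex_holomorphic)+
  then show ?thesis
    unfolding sqrt_domain_def Collect_conj_eq
    by (intro open_Int open_Collect_less open_Collect_neq continuous_intros) auto
qed

lemma open_height_domain: "open (height_domain k)"
  unfolding height_domain_def
  by (intro continuous_open_preimage open_sqrt_domain open_Collect_less continuous_intros
      holomorphic_on_imp_continuous_on cos_height_complex_holomorphic)

lemma tangency_height_complex_holomorphic: "tangency_height_complex k holomorphic_on height_domain k"
proof -
  have "cos_height_complex k holomorphic_on height_domain k"
    by (rule holomorphic_on_subset[OF cos_height_complex_holomorphic]) (auto simp: height_domain_def)
  moreover have "Arccos holomorphic_on cos_height_complex k ` height_domain k"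
    by (rule holomorphic_on_Arccos) (auto simp: height_domain_def)
  ultimately have "(Arccos \<circ> cos_height_complex k) holomorphic_on height_domain k"
    by (rule holomorphic_on_compose)
  then show ?thesis
    unfolding tangency_height_complex_def o_def by (intro holomorphic_intros) simp_all
qed

lemma of_real_mem_height_domain:
  assumes "1 \<le> k"
  shows "complex_of_real s \<in> height_domain k"
proof -
  have "0 < 3 * (tang_P t)\<^sup>2 + (tang_q t)\<^sup>2" and "tang_P t \<noteq> 0" for t :: real
    using tang_P_pos[of t] by (simp_all add: add_pos_nonneg)
  moreover have "\<bar>cos_height k s\<bar> < 1" using cos_height_bounds[OF assms, of s] by simp
  ultimately show ?thesis
    by (simp add: height_domain_def sqrt_domain_def cos_height_complex_of_real psi_c_complex_of_real
        tang_P_of_real tang_q_of_real flip: of_real_power of_real_mult of_real_add)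
qed

lemma tangency_height_complex_of_real:
  assumes "1 \<le> k"
  shows "tangency_height_complex k (of_real s) = of_real (tangency_height k s)"
proof -
  have "\<bar>cos_height k s\<bar> \<le> 1" using cos_height_bounds[OF assms, of s] by simp
  then show ?thesis
    by (simp add: tangency_height_complex_def tangency_height_def cos_height_complex_of_real of_real_arccos)
qed

text \<open>The two branches are \<open>tangency_curve k 0 1\<close> (with \<open>y < 1/2\<close>) and
  \<open>tangency_curve k 1 (-1)\<close> (with \<open>y > 1/2\<close>).\<close>

definition tangency_curve :: "real \<Rightarrow> real \<Rightarrow> real \<Rightarrow> real \<Rightarrow> real \<times> real" where
  "tangency_curve k a \<sigma> s = (a + \<sigma> * tangency_height k s - s, a + \<sigma> * tangency_height k s)"

lemma smooth_regular_tangency_curve: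
  assumes "1 \<le> k"
  shows "smooth_regular_curve (tangency_curve k a \<sigma>)"
proof -
  define F2 where "F2 z = of_real a + of_real \<sigma> * tangency_height_complex k z" for z
  define F1 where "F1 z = F2 z - z" for z
  have holo: "F1 holomorphic_on height_domain k" "F2 holomorphic_on height_domain k"
    unfolding F1_def F2_def by (intro holomorphic_intros tangency_height_complex_holomorphic)+
  note real = of_real_mem_height_domain[OF assms]
  have curve: "tangency_curve k a \<sigma> = (\<lambda>s. (Re (F1 (of_real s)), Re (F2 (of_real s))))"
    by (simp add: fun_eq_iff tangency_curve_def F1_def F2_def tangency_height_complex_of_real[OF assms])
  define d where "d t = Re (deriv (tangency_height_complex k) (of_real t))" for t
  have "(tangency_height k has_real_derivative d t) (at t)" for t
    using has_vector_derivative_Re_holomorphic[OF tangency_height_complex_holomorphic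
        open_height_domain real]
    by (simp add: d_def tangency_height_complex_of_real[OF assms] has_real_derivative_iff_has_vector_derivative)
  then have "((\<lambda>s. a + \<sigma> * tangency_height k s - s) has_real_derivative \<sigma> * d t - 1) (at t)"
    and "((\<lambda>s. a + \<sigma> * tangency_height k s) has_real_derivative \<sigma> * d t) (at t)" for t
    by (auto intro!: derivative_eq_intros)
  then have "(tangency_curve k a \<sigma> has_vector_derivative (\<sigma> * d t - 1, \<sigma> * d t)) (at t)" for t
    unfolding tangency_curve_def has_real_derivative_iff_has_vector_derivative
    by (intro has_vector_derivative_Pair)
  then have "vector_derivative (tangency_curve k a \<sigma>) (at t) = (\<sigma> * d t - 1, \<sigma> * d t)" for t
    by (rule vector_derivative_at)
  then have "vector_derivative (tangency_curve k a \<sigma>) (at t) \<noteq> 0" for t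
    by (auto simp: zero_prod_def)
  then show ?thesis
    unfolding smooth_regular_curve_def curve
    using nth_vderiv_Re_holomorphic_differentiable[OF holo open_height_domain real] by blast
qed

lemma tangency_height_eqI:
  assumes "1 \<le> k" "0 \<le> y" "y \<le> 1/2" "psi_c k y = psi_minus (psi_c k s)"
  shows "tangency_height k s = y"
proof -
  have "0 < k" using assms(1) by simp
  have eq: "psi_c k y = psi_c k (tangency_height k s)"
    using assms(4) psi_c_tangency_height[OF assms(1)] by simp
  have h: "0 \<le> tangency_height k s" "tangency_height k s \<le> 1/2"
    using tangency_height_bounds[OF assms(1), of s] by simp_all
  show ?thesis
  proof (rule antisym)
    show "tangency_height k s \<le> y" using psi_c_le_psi_c_iff[OF \<open>0 < k\<close> assms(2,3) h] eq by simp
    show "y \<le> tangency_height k s" using psi_c_le_psi_c_iff[OF \<open>0 < k\<close> h assms(2,3)] eq by simp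
  qed
qed

lemma torus_proj_mem_tangency_set:
  assumes "0 \<le> y" "y < 1" "psi_c k y = psi_minus (psi_c k s)"
  shows "torus_proj (y - s, y) \<in> tangency_set k"
proof -
  have "psi_c k (y - frac (y - s)) = psi_c k s"
    using psi_c_add_of_int[of k s "\<lfloor>y - s\<rfloor>"] by (simp add: frac_def)
  then show ?thesis
    using assms by (simp add: torus_proj_def frac_eq mem_tangency_set_iff torus_rep_def frac_lt_1)
qed

lemma tangency_set_eq_curves:
  assumes "1 \<le> k"
  shows "tangency_set k = torus_proj ` range (tangency_curve k 0 1) \<union> torus_proj ` range (tangency_curve k 1 (-1))"
proof (intro equalityI subsetI)
  fix z assume "z \<in> tangency_set k"
  moreover obtain x y where z: "z = (x, y)" by (cases z)
  ultimately have rep: "0 \<le> x" "x < 1" "0 \<le> y" "y < 1"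
    and eq: "psi_c k y = psi_minus (psi_c k (y - x))"
    by (auto simp: mem_tangency_set_iff torus_rep_def)
  have proj: "z = torus_proj (y - (y - x), y)" using rep by (simp add: z torus_proj_def frac_eq)
  show "z \<in> torus_proj ` range (tangency_curve k 0 1) \<union> torus_proj ` range (tangency_curve k 1 (-1))"
  proof (cases "y \<le> 1/2")
    case True
    then have "tangency_curve k 0 1 (y - x) = (y - (y - x), y)"
      using tangency_height_eqI[OF assms rep(3) True eq] by (simp add: tangency_curve_def)
    then show ?thesis using proj by (metis UnI1 rangeI image_eqI)
  next
    case False
    then have "tangency_curve k 1 (-1) (y - x) = (y - (y - x), y)"
      using tangency_height_eqI[OF assms, of "1 - y"] rep eq by (simp add: tangency_curve_def psi_c_one_minus)
    then show ?thesis using proj by (metis UnI2 rangeI image_eqI)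
  qed
next
  fix z assume "z \<in> torus_proj ` range (tangency_curve k 0 1) \<union> torus_proj ` range (tangency_curve k 1 (-1))"
  then obtain s a \<sigma> where z: "z = torus_proj (tangency_curve k a \<sigma> s)"
    and a: "(a, \<sigma>) = (0, 1) \<or> (a, \<sigma>) = (1, -1)" by blast
  define y where "y = a + \<sigma> * tangency_height k s"
  have "0 \<le> y" "y < 1" using a tangency_height_bounds[OF assms, of s] by (auto simp: y_def)
  moreover have "psi_c k y = psi_minus (psi_c k s)"
    using a psi_c_tangency_height[OF assms] by (auto simp: y_def psi_c_one_minus)
  ultimately show "z \<in> tangency_set k"
    using torus_proj_mem_tangency_set by (simp add: z tangency_curve_def y_def)
qed

lemma tangency_curves_disjoint:
  assumes "1 \<le> k"
  shows "torus_proj ` range (tangency_curve k 0 1) \<inter> torus_proj ` range (tangency_curve k 1 (-1)) = {}"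
proof -
  have "snd (torus_proj (tangency_curve k 0 1 s)) < 1/2" "1/2 < snd (torus_proj (tangency_curve k 1 (-1) s'))"
    for s s'
    using tangency_height_bounds[OF assms, of s] tangency_height_bounds[OF assms, of s']
    by (simp_all add: torus_proj_def tangency_curve_def frac_eq)
  then have "torus_proj (tangency_curve k 0 1 s) \<noteq> torus_proj (tangency_curve k 1 (-1) s')" for s s'
    by (metis less_asym)
  then show ?thesis by blast
qed

lemma tangency_set_two_smooth_curves:
  assumes "1 \<le> k"
  shows "two_smooth_curves (tangency_set k)"
  unfolding two_smooth_curves_def
  by (intro exI[of _ "tangency_curve k 0 1"] exI[of _ "tangency_curve k 1 (-1)"] conjI
      smooth_regular_tangency_curve tangency_curves_disjoint tangency_set_eq_curves assms)

theorem theorem2: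
  "\<exists>K>0. \<forall>k\<ge>K.
     two_smooth_curves (tangency_set k) \<and>
     tangency_set k \<subseteq> Delta_hat_T k \<and>
     (\<forall>x y. (x, y) \<in> torus_rep \<longrightarrow>
        frac (y - x) \<notin> {delta_star k, 1 - delta_star k} \<longrightarrow>
        ((x, y) \<in> tangency_set k \<longleftrightarrow> y \<in> Gamma_set k (frac (y - x))))"
proof (intro exI[of _ "1::real"] conjI allI impI)
  fix k :: real assume k: "1 \<le> k"
  show "two_smooth_curves (tangency_set k)" by (rule tangency_set_two_smooth_curves[OF k])
  show "tangency_set k \<subseteq> Delta_hat_T k" by (rule tangency_set_subset_Delta_hat_T[OF k])
  fix x y assume "(x, y) \<in> torus_rep" "frac (y - x) \<notin> {delta_star k, 1 - delta_star k}"
  then show "(x, y) \<in> tangency_set k \<longleftrightarrow> y \<in> Gamma_set k (frac (y - x))"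
    by (rule mem_tangency_set_iff_Gamma_set[OF k])
qed simp

end
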